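(* $\mathcal{C}_2(8,4,3)\le 6897$.
   Context: $\mathcal{C}_q(n,k,r)$ is the minimum number of $k$-dimensional subspaces of $\mathbb{F}_q^n$ such that every $r$-dimensional subspace of $\mathbb{F}_q^n$ is contained in at least one of them. *)

theory Defs
  imports Main "HOL-Library.Z2"
begin

text \<open>Vectors of F^n are represented as functions nat => F vanishing outside {0..<n}.\<close>

definition vecs :: "nat \<Rightarrow> (nat \<Rightarrow> 'a::field) set" where
  "vecs n = {v. \<forall>i\<ge>n. v i = 0}"

definition lin_comb :: "'a::field list \<Rightarrow> (nat \<Rightarrow> 'a) list \<Rightarrow> (nat \<Rightarrow> 'a)" where
  "lin_comb cs vs = (\<lambda>j. \<Sum>i<length vs. cs ! i * (vs ! i) j)"

definition span_of :: "(nat \<Rightarrow> 'a::field) list \<Rightarrow> (nat \<Rightarrow> 'a) set" where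
  "span_of vs = {lin_comb cs vs | cs. length cs = length vs}"

definition lin_indep :: "(nat \<Rightarrow> 'a::field) list \<Rightarrow> bool" where
  "lin_indep vs = (\<forall>cs. length cs = length vs \<longrightarrow> lin_comb cs vs = (\<lambda>_. 0) \<longrightarrow> (\<forall>c\<in>set cs. c = 0))"

definition subspaces_dim :: "'a::field itself \<Rightarrow> nat \<Rightarrow> nat \<Rightarrow> (nat \<Rightarrow> 'a) set set" where
  "subspaces_dim _ n k = {S. \<exists>vs. length vs = k \<and> set vs \<subseteq> vecs n \<and> lin_indep vs \<and> S = span_of vs}"

definition covering_number :: "'a::field itself \<Rightarrow> nat \<Rightarrow> nat \<Rightarrow> nat \<Rightarrow> nat" where
  "covering_number F n k r = (LEAST m. \<exists>\<F>. \<F> \<subseteq> subspaces_dim F n k \<and> finite \<F> \<and> card \<F> = m \<and>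
       (\<forall>R\<in>subspaces_dim F n r. \<exists>K\<in>\<F>. R \<subseteq> K))"

end

theory Submission
  imports Defs "HOL-Library.Function_Algebras"
begin

(* We prove C_2(8,4,3) <= 6897 by exhibiting 6897 four-dimensional subspaces ("blocks")
   of F_2^8 = F_2^4 x F_2^4 that together contain every three-dimensional subspace R.
   Write low/high for the projections onto the two halves.  The blocks are
   - the kernel {0} x F_2^4 of low (1 block), covering R when low(R) = 0;
   - the graphs {(x, G x)} of the 4096 linear maps G of a rank-metric code: G is determined
     by its values r0, r1, r2 on e0, e1, e2, and G e3 = alpha r0 + alpha^2 r1 + alpha^3 r2
     with alpha the multiplication by a primitive element of F_16.  Every nonzero map of the
     code has rank >= 2, hence the code interpolates arbitrary values on any 3-dimensional
     space; this covers R when low is injective on R;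
   - 2800 "mixed" blocks built from a packing of PG(3,2) into 7 spreads of 5 lines each,
     every line coming with a fixed complementary plane: for lines L', L of one spread and
     q1, q2 in the complement of L, the block spanned by (p1', q1), (p2', q2) and {0} x L,
     where p1', p2' is the given basis of L'.
     These cover R when low(R) has dimension 1 or 2.
   The file first develops linear algebra over F_2 for the list-based spans of Defs
   (exchange lemma, counting, linear maps), then the rank-metric code, then the packing,
   whose combinatorial properties are checked by evaluation, then the blocks and the case
   analysis on dim low(R), and finally counts the blocks. *)

(* Addition and multiplication on bit are kept as the field operations. *)
declare add_bit_eq_xor [simp del] mult_bit_eq_and [simp del]

type_synonym vec = "nat \<Rightarrow> bit"

lemma bit_add_self [simp]: "(x::bit) + x = 0"
  by (cases x) simp_all

lemma vec_add_self [simp]: "(v::vec) + v = 0"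
  by (rule ext) simp

lemma vec_add_cancel_left [simp]: "(v::vec) + (v + w) = w"
  by (simp add: add.assoc [symmetric])

lemma vec_add_eq_0_iff: "(v::vec) + w = 0 \<longleftrightarrow> v = w"
  by (metis vec_add_cancel_left add_0_right)

lemma lin_comb_Nil [simp]: "lin_comb cs [] = 0"
  by (simp add: lin_comb_def zero_fun_def)

lemma lin_comb_Cons [simp]: "lin_comb (c # cs) (v # vs) = (\<lambda>j. c * v j + lin_comb cs vs j)"
  unfolding lin_comb_def by (simp only: length_Cons sum.lessThan_Suc_shift nth_Cons_0 nth_Cons_Suc)

lemma span_of_Nil [simp]: "span_of [] = {0}"
  by (simp add: span_of_def)

(* Over F_2 a coefficient is 0 or 1, so adding a generator v to a list adds the
   translate v + S of the old span S.  Most facts about spans below follow from this. *)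
lemma span_of_Cons: "span_of (v # vs :: vec list) = span_of vs \<union> (+) v ` span_of vs"
proof (intro set_eqI iffI)
  fix x assume "x \<in> span_of (v # vs)"
  then obtain c cs where x: "x = lin_comb (c # cs) (v # vs)" "length cs = length vs"
    unfolding span_of_def by (auto simp: length_Suc_conv)
  have w: "lin_comb cs vs \<in> span_of vs" using x(2) by (auto simp: span_of_def)
  show "x \<in> span_of vs \<union> (+) v ` span_of vs"
    by (cases c) (use x w in \<open>auto simp: plus_fun_def\<close>)
next
  fix x assume "x \<in> span_of vs \<union> (+) v ` span_of vs"
  then obtain c cs where "length cs = length vs" "x = (\<lambda>j. c * v j + lin_comb cs vs j)"
    unfolding span_of_def plus_fun_def
    by (elim UnE imageE CollectE exE conjE) (metis mult_zero_left add_0, metis mult_1)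
  then show "x \<in> span_of (v # vs)"
    unfolding span_of_def by (auto intro!: exI [of _ "c # cs"])
qed

lemma zero_in_span [simp]: "(0::vec) \<in> span_of vs"
  by (induction vs) (auto simp: span_of_Cons)

lemma set_subset_span: "set vs \<subseteq> span_of (vs :: vec list)"
proof (induction vs)
  case (Cons v vs)
  have "v = v + 0" by simp
  then show ?case using Cons by (auto simp: span_of_Cons simp del: add_0_right)
qed simp

(* Over F_2 the subspaces are exactly the sets containing 0 and closed under addition. *)
definition add_closed :: "vec set \<Rightarrow> bool" where
  "add_closed K \<longleftrightarrow> 0 \<in> K \<and> (\<forall>x\<in>K. \<forall>y\<in>K. x + y \<in> K)"

lemma add_closed_span: "add_closed (span_of vs)"
proof (induction vs)
  case (Cons v vs)
  then show ?case
    unfolding add_closed_def span_of_Cons by (auto simp: add.left_commute add.assoc [symmetric])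
qed (simp add: add_closed_def)

lemma add_closed_vecs: "add_closed (vecs n)"
  by (simp add: add_closed_def vecs_def)

lemma span_subset: "add_closed K \<Longrightarrow> set vs \<subseteq> K \<Longrightarrow> span_of vs \<subseteq> K"
  by (induction vs) (auto simp: add_closed_def span_of_Cons)

lemma span_subset_span: "set us \<subseteq> span_of vs \<Longrightarrow> span_of us \<subseteq> span_of (vs :: vec list)"
  by (rule span_subset [OF add_closed_span])

lemma span_in_vecs: "set vs \<subseteq> vecs n \<Longrightarrow> span_of (vs :: vec list) \<subseteq> vecs n"
  by (simp add: span_subset add_closed_vecs)

lemma finite_span: "finite (span_of (vs :: vec list))"
  by (induction vs) (simp_all add: span_of_Cons)

lemma card_span_le: "card (span_of (vs :: vec list)) \<le> 2 ^ length vs"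
proof (induction vs)
  case (Cons v vs)
  have "card (span_of (v # vs)) \<le> card (span_of vs) + card ((+) v ` span_of vs)"
    unfolding span_of_Cons by (rule card_Un_le)
  also have "\<dots> \<le> 2 * card (span_of vs)" using card_image_le [OF finite_span] by simp
  finally show ?case using Cons by simp
qed simp

lemma lin_indep_Nil [simp]: "lin_indep []"
  by (simp add: lin_indep_def)

lemma lin_indep_Cons:
  "lin_indep (v # vs :: vec list) \<longleftrightarrow> v \<notin> span_of vs \<and> lin_indep vs"
proof
  assume ind: "lin_indep (v # vs)"
  have "lin_comb (1 # cs) (v # vs) \<noteq> (\<lambda>_. 0)" if "length cs = length vs" for cs
  proof
    assume "lin_comb (1 # cs) (v # vs) = (\<lambda>_. 0)"
    then have "\<forall>c\<in>set (1 # cs). c = 0"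
      using ind that unfolding lin_indep_def by (metis length_Cons)
    then show False by simp
  qed
  then have "v \<noteq> lin_comb cs vs" if "length cs = length vs" for cs
    using that by fastforce
  moreover have "lin_indep vs"
    unfolding lin_indep_def
  proof (intro allI impI)
    fix cs :: "bit list" assume "length cs = length vs" "lin_comb cs vs = (\<lambda>_. 0)"
    then have "lin_comb (0 # cs) (v # vs) = (\<lambda>_. 0)" by simp
    then have "\<forall>c\<in>set (0 # cs). c = 0"
      using ind \<open>length cs = length vs\<close> unfolding lin_indep_def by (metis length_Cons)
    then show "\<forall>c\<in>set cs. c = 0" by simp
  qed
  ultimately show "v \<notin> span_of vs \<and> lin_indep vs" unfolding span_of_def by blast
next
  assume asm: "v \<notin> span_of vs \<and> lin_indep vs"
  then have ind: "lin_indep vs" by blast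
  have out: "v \<noteq> lin_comb cs vs" if "length cs = length vs" for cs
    using asm that unfolding span_of_def by auto
  show "lin_indep (v # vs)"
    unfolding lin_indep_def
  proof (intro allI impI)
    fix cs' :: "bit list"
    assume "length cs' = length (v # vs)" and zero: "lin_comb cs' (v # vs) = (\<lambda>_. 0)"
    then obtain c cs where cs': "cs' = c # cs" and len: "length cs = length vs"
      by (auto simp: length_Suc_conv)
    have "c = 0"
    proof (rule ccontr)
      assume "c \<noteq> 0"
      then have "v + lin_comb cs vs = 0" using zero by (simp add: cs' plus_fun_def zero_fun_def)
      then show False using out [OF len] by (simp add: vec_add_eq_0_iff)
    qed
    then have "lin_comb cs vs = (\<lambda>_. 0)" using zero by (simp add: cs')
    then show "\<forall>c\<in>set cs'. c = 0" using ind len \<open>c = 0\<close> unfolding lin_indep_def cs' by simp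
  qed
qed

lemma span_of_pair: "span_of [a, b :: vec] = {0, a, b, a + b}"
  by (auto simp: span_of_Cons)

lemma lin_indep_pair: "lin_indep [a, b :: vec] \<longleftrightarrow> a \<noteq> 0 \<and> b \<noteq> 0 \<and> a \<noteq> b"
  by (auto simp: lin_indep_Cons span_of_Cons)

lemma card_span: "lin_indep vs \<Longrightarrow> card (span_of (vs :: vec list)) = 2 ^ length vs"
proof (induction vs)
  case (Cons v vs)
  let ?S = "span_of vs"
  have v: "v \<notin> ?S" and ind: "lin_indep vs" using Cons.prems by (simp_all add: lin_indep_Cons)
  have disj: "?S \<inter> (+) v ` ?S = {}"
  proof (intro equals0I)
    fix x assume "x \<in> ?S \<inter> (+) v ` ?S"
    then obtain y where "x \<in> ?S" "y \<in> ?S" "x = v + y" by blast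
    then have "v = x + y" by (simp add: add.assoc)
    then show False using v \<open>x \<in> ?S\<close> \<open>y \<in> ?S\<close> add_closed_span unfolding add_closed_def by metis
  qed
  have "card (span_of (v # vs)) = card ?S + card ((+) v ` ?S)"
    unfolding span_of_Cons by (rule card_Un_disjoint) (simp_all add: finite_span disj)
  also have "card ((+) v ` ?S) = card ?S" by (rule card_image) (simp add: inj_on_def)
  finally show ?case using Cons.IH [OF ind] by simp
qed simp

lemma span_eq_if_subset:
  assumes "lin_indep us" "lin_indep vs" "length us = length vs" "set us \<subseteq> span_of vs"
  shows "span_of us = span_of (vs :: vec list)"
  using card_subset_eq [OF finite_span span_subset_span [OF assms(4)]] card_span assms(1-3) by simp

lemma span_of_swap: "span_of (a # b # vs) = span_of (b # a # vs :: vec list)"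
proof -
  have comm: "(\<lambda>x. a + (b + x)) = (\<lambda>x. b + (a + x))" by (simp add: add.left_commute)
  show ?thesis unfolding span_of_Cons image_Un image_image comm by (simp only: Un_ac)
qed

lemma lin_indep_swap: "lin_indep (a # b # vs) \<longleftrightarrow> lin_indep (b # a # vs :: vec list)"
proof -
  have "a \<in> (+) b ` S \<longleftrightarrow> b \<in> (+) a ` S" for S :: "vec set"
  proof -
    have "a = b + x \<longleftrightarrow> b = a + x" for x :: vec
      by (auto simp: add.assoc)
    then show ?thesis by (simp add: image_iff)
  qed
  then show ?thesis by (auto simp: lin_indep_Cons span_of_Cons)
qed

lemma span_Cons_cong: "span_of vs = span_of ws \<Longrightarrow> span_of (v # vs) = span_of (v # ws :: vec list)"
  by (simp add: span_of_Cons)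

lemma translate_span:
  assumes "w \<in> span_of vs"
  shows "(+) (v + w) ` span_of vs = (+) v ` span_of (vs :: vec list)"
proof -
  have closed: "w + x \<in> span_of vs" if "x \<in> span_of vs" for x
    using add_closed_span assms that unfolding add_closed_def by blast
  show ?thesis
  proof (intro set_eqI iffI)
    fix y assume "y \<in> (+) (v + w) ` span_of vs"
    then obtain x where "x \<in> span_of vs" "y = v + (w + x)" by (auto simp: add.assoc)
    then show "y \<in> (+) v ` span_of vs" using closed by blast
  next
    fix y assume "y \<in> (+) v ` span_of vs"
    then obtain x where "x \<in> span_of vs" "y = (v + w) + (w + x)" by (auto simp: add.assoc)
    then show "y \<in> (+) (v + w) ` span_of vs" using closed by blast
  qed
qed

lemma exchange:
  assumes "lin_indep vs" "z \<in> span_of vs" "z \<noteq> 0"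
  shows "\<exists>us. length us + 1 = length vs \<and> lin_indep (z # us) \<and>
           span_of (z # us) = span_of (vs :: vec list)"
  using assms
proof (induction vs arbitrary: z)
  case (Cons v vs)
  have v: "v \<notin> span_of vs" and ind: "lin_indep vs" using Cons.prems(1)
    by (simp_all add: lin_indep_Cons)
  show ?case
  proof (cases "z \<in> span_of vs")
    case True
    then obtain us where
      us: "length us + 1 = length vs" "lin_indep (z # us)" "span_of (z # us) = span_of vs"
      using Cons.IH [OF ind _ Cons.prems(3)] by blast
    have "lin_indep (v # z # us)" using us v by (simp add: lin_indep_Cons [of v])
    then have "lin_indep (z # v # us)" by (simp add: lin_indep_swap)
    moreover have "span_of (z # v # us) = span_of (v # vs)"
      using span_of_swap [of z v us] span_Cons_cong [OF us(3), of v] by (rule trans)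
    ultimately show ?thesis using us(1) by (intro exI [of _ "v # us"]) simp
  next
    case False
    then obtain w where w: "w \<in> span_of vs" "z = v + w" using Cons.prems(2)
      by (auto simp: span_of_Cons)
    have "span_of (z # vs) = span_of (v # vs)"
      unfolding span_of_Cons w(2) translate_span [OF w(1)] ..
    moreover have "lin_indep (z # vs)" using False ind by (simp add: lin_indep_Cons)
    ultimately show ?thesis by (intro exI [of _ vs]) simp
  qed
qed simp

lemma card_UNIV_bit: "card (UNIV :: bit set) = 2"
proof -
  have univ: "(UNIV :: bit set) = {0, 1}" by (auto intro: bit.exhaust)
  show ?thesis by (subst univ) simp
qed

lemma vecs_lists_bij:
  "bij_betw (\<lambda>xs i. if i < n then xs ! i else 0)
     {xs. set xs \<subseteq> UNIV \<and> length xs = n} (vecs n :: vec set)"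
proof (rule bij_betw_byWitness [where f' = "\<lambda>v. map v [0..<n]"])
  show "\<forall>xs\<in>{xs. set xs \<subseteq> UNIV \<and> length xs = n}. map (\<lambda>i. if i < n then xs ! i else 0) [0..<n] = xs"
    by (auto intro: nth_equalityI)
  show "\<forall>v\<in>vecs n. (\<lambda>i. if i < n then map v [0..<n] ! i else 0) = v"
    by (auto simp: vecs_def)
qed (auto simp: vecs_def)

lemma finite_vecs: "finite (vecs n :: vec set)"
  and card_vecs: "card (vecs n :: vec set) = 2 ^ n"
  using bij_betw_finite [OF vecs_lists_bij] bij_betw_same_card [OF vecs_lists_bij]
    finite_lists_length_eq [of "UNIV :: bit set"] card_lists_length_eq [of "UNIV :: bit set"]
  by (simp_all add: card_UNIV_bit card_ge_0_finite)

lemma span_eq_vecs: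
  "lin_indep vs \<Longrightarrow> set vs \<subseteq> vecs n \<Longrightarrow> length vs = n \<Longrightarrow> span_of vs = (vecs n :: vec set)"
  using card_subset_eq [OF finite_vecs span_subset [OF add_closed_vecs]] card_span card_vecs
    by metis

lemma exists_outside_span:
  assumes "lin_indep vs" "set vs \<subseteq> vecs n" "length vs < n"
  shows "\<exists>e \<in> vecs n. e \<notin> span_of (vs :: vec list)"
proof (rule ccontr)
  assume "\<not> ?thesis"
  then have "vecs n \<subseteq> span_of vs" by blast
  then have "2 ^ n \<le> (2::nat) ^ length vs"
    using card_mono [OF finite_span] card_vecs card_span [OF assms(1)] by metis
  then show False using assms(3) by simp
qed

definition is_linear :: "((nat \<Rightarrow> 'a::field) \<Rightarrow> (nat \<Rightarrow> 'a)) \<Rightarrow> bool" where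
  "is_linear f \<longleftrightarrow> (\<forall>cs vs. length cs = length vs \<longrightarrow> f (lin_comb cs vs) = lin_comb cs (map f vs))"

lemma is_linear_zero: "is_linear f \<Longrightarrow> f 0 = 0"
  unfolding is_linear_def by (metis lin_comb_Nil list.map(1) list.size(3))

lemma is_linear_span: "is_linear f \<Longrightarrow> x \<in> span_of vs \<Longrightarrow> f x \<in> span_of (map f vs)"
  unfolding is_linear_def span_of_def by auto

lemma lin_indep_if_map:
  assumes f: "is_linear f" and ind: "lin_indep (map f vs)"
  shows "lin_indep vs"
  unfolding lin_indep_def
proof (intro allI impI)
  fix cs assume len: "length cs = length vs" and zero: "lin_comb cs vs = (\<lambda>_. 0)"
  have "lin_comb cs (map f vs) = f (lin_comb cs vs)" using f len unfolding is_linear_def by simp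
  also have "\<dots> = (\<lambda>_. 0)" using is_linear_zero [OF f] zero by (simp add: zero_fun_def)
  finally show "\<forall>c\<in>set cs. c = 0" using ind len unfolding lin_indep_def by simp
qed

lemma kernel_vector:
  assumes "is_linear f" "lin_indep vs" "\<not> lin_indep (map f vs)"
  shows "\<exists>z \<in> span_of vs. z \<noteq> 0 \<and> f z = 0"
proof -
  obtain cs where cs: "length cs = length vs" "lin_comb cs (map f vs) = 0" "\<exists>c\<in>set cs. c \<noteq> 0"
    using assms(3) unfolding lin_indep_def zero_fun_def by auto
  have "lin_comb cs vs \<noteq> 0" using assms(2) cs(1,3) unfolding lin_indep_def zero_fun_def by blast
  moreover have "f (lin_comb cs vs) = 0" using assms(1) cs(1,2) unfolding is_linear_def by simp
  ultimately show ?thesis using cs(1) unfolding span_of_def by blast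
qed

lemma lin_comb_append:
  "length cs = length us \<Longrightarrow> lin_comb (cs @ ds) (us @ ws) = lin_comb cs us + lin_comb ds ws"
  by (induction cs us rule: list_induct2) (simp_all add: plus_fun_def add.assoc)

lemma lin_comb_zero_coeffs: "length cs = length vs \<Longrightarrow> \<forall>c\<in>set cs. c = 0 \<Longrightarrow> lin_comb cs vs = 0"
  unfolding lin_comb_def zero_fun_def
    by (rule ext, rule sum.neutral) (metis lessThan_iff mult_zero_left nth_mem)

lemma lin_comb_zero_vecs: "\<forall>v\<in>set vs. v = 0 \<Longrightarrow> lin_comb cs vs = 0"
  unfolding lin_comb_def zero_fun_def
    by (rule ext, rule sum.neutral) (metis lessThan_iff mult_zero_right nth_mem)

lemma lin_indep_append:
  assumes f: "is_linear f" and us: "lin_indep (map f us)"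
    and ws: "lin_indep ws" "\<forall>w\<in>set ws. f w = 0"
  shows "lin_indep (us @ ws)"
  unfolding lin_indep_def
proof (intro allI impI)
  fix es assume len: "length es = length (us @ ws)" and zero: "lin_comb es (us @ ws) = (\<lambda>_. 0)"
  obtain cs ds where es: "es = cs @ ds" "length cs = length us" "length ds = length ws"
    using len by (metis append_eq_conv_conj length_drop length_take)
  have "lin_comb cs (map f us) = lin_comb (cs @ ds) (map f us @ map f ws)"
    using ws(2) es(2) by (simp add: lin_comb_append lin_comb_zero_vecs)
  also have "\<dots> = f (lin_comb es (us @ ws))"
    using f len unfolding is_linear_def es(1) by simp
  also have "\<dots> = 0" using is_linear_zero [OF f] zero by (simp add: zero_fun_def)
  finally have cs0: "\<forall>c\<in>set cs. c = 0" using us es(2) unfolding lin_indep_def zero_fun_def by simp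
  then have "lin_comb ds ws = (\<lambda>_. 0)"
    using zero es by (simp add: lin_comb_append lin_comb_zero_coeffs zero_fun_def)
  then have "\<forall>d\<in>set ds. d = 0" using ws(1) es(3) unfolding lin_indep_def by blast
  then show "\<forall>e\<in>set es. e = 0" using cs0 es(1) by auto
qed

lemma lin_indep_prefix: "lin_indep (xs @ ys) \<Longrightarrow> lin_indep xs"
  unfolding lin_indep_def
proof (intro allI impI)
  fix cs
  assume ind: "\<forall>cs. length cs = length (xs @ ys) \<longrightarrow> lin_comb cs (xs @ ys) = (\<lambda>_. 0) \<longrightarrow>
                 (\<forall>c\<in>set cs. c = 0)"
    and len: "length cs = length xs" and zero: "lin_comb cs xs = (\<lambda>_. 0)"
  have "lin_comb (cs @ replicate (length ys) 0) (xs @ ys) = (\<lambda>_. 0)"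
    using len zero by (simp add: lin_comb_append lin_comb_zero_coeffs zero_fun_def)
  then have "\<forall>c\<in>set (cs @ replicate (length ys) 0). c = 0"
    using ind len by (metis length_append length_replicate)
  then show "\<forall>c\<in>set cs. c = 0" by simp
qed

lemma is_linear_coord_map: "is_linear (\<lambda>v i. if P i then v (g i) else 0)"
  unfolding is_linear_def lin_comb_def by (auto simp: fun_eq_iff)

definition join :: "vec \<Rightarrow> vec \<Rightarrow> vec" where
  "join x y = (\<lambda>i. if i < 4 then x i else if i < 8 then y (i - 4) else 0)"

definition low :: "vec \<Rightarrow> vec" where
  "low v = (\<lambda>i. if i < 4 then v i else 0)"

definition high :: "vec \<Rightarrow> vec" where
  "high v = (\<lambda>i. if i < 4 then v (i + 4) else 0)"

lemma join_in_vecs [simp]: "join x y \<in> vecs 8"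
  and low_in_vecs [simp]: "low v \<in> vecs 4"
  and high_in_vecs [simp]: "high v \<in> vecs 4"
  by (simp_all add: vecs_def join_def low_def high_def)

lemma join_low_high: "v \<in> vecs 8 \<Longrightarrow> join (low v) (high v) = v"
  by (auto simp: fun_eq_iff join_def low_def high_def vecs_def)

lemma low_join [simp]: "x \<in> vecs 4 \<Longrightarrow> low (join x y) = x"
  and high_join [simp]: "y \<in> vecs 4 \<Longrightarrow> high (join x y) = y"
  by (auto simp: fun_eq_iff join_def low_def high_def vecs_def)

lemma low_join_zero [simp]: "low (join 0 y) = 0"
  by (simp add: fun_eq_iff join_def low_def)

lemma join_add: "join x y + join x' y' = join (x + x') (y + y')"
  and join_zero [simp]: "join 0 0 = 0"
  by (simp_all add: fun_eq_iff join_def low_def)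

lemma low_zero_join: "v \<in> vecs 8 \<Longrightarrow> low v = 0 \<Longrightarrow> v = join 0 (high v)"
  using join_low_high by metis

lemma is_linear_low: "is_linear low"
  unfolding low_def by (rule is_linear_coord_map)

lemma is_linear_high: "is_linear high"
  unfolding high_def by (rule is_linear_coord_map)

lemma is_linear_join_zero: "is_linear (join 0)"
proof -
  have "join 0 = (\<lambda>y i. if 4 \<le> i \<and> i < 8 then y (i - 4) else 0)"
    by (auto simp: fun_eq_iff join_def)
  then show ?thesis by (simp only: is_linear_coord_map)
qed

lemma join_lin_comb:
  "length cs = length us \<Longrightarrow> length us = length ws \<Longrightarrow>
    join (lin_comb cs us) (lin_comb cs ws) = lin_comb cs (map2 join us ws)"
proof (induction cs us ws rule: list_induct3)
  case (Cons c cs u us w ws)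
  have "lin_comb (c # cs) (map2 join (u # us) (w # ws)) =
      (\<lambda>j. c * join u w j + join (lin_comb cs us) (lin_comb cs ws) j)"
    by (simp add: Cons.IH)
  then show ?case by (auto simp: fun_eq_iff join_def)
qed (simp add: fun_eq_iff join_def)

lemma join_lift:
  assumes "length us = length ws" "x \<in> span_of us"
  shows "\<exists>y\<in>span_of ws. join x y \<in> span_of (map2 join us ws)"
proof -
  obtain cs where cs: "length cs = length us" "x = lin_comb cs us" using assms(2)
    unfolding span_of_def by blast
  then have "join x (lin_comb cs ws) = lin_comb cs (map2 join us ws)" using assms(1)
    by (simp add: join_lin_comb)
  moreover have "lin_comb cs ws \<in> span_of ws"
    and "lin_comb cs (map2 join us ws) \<in> span_of (map2 join us ws)"
    using cs(1) assms(1) unfolding span_of_def by auto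
  ultimately show ?thesis by metis
qed

(* A linear map from the plane span [a1, a2] into span [c1, c2], given by its values
   c1, c2 on a1, a2, can be described instead by its values on any other basis p1, p2:
   the graph is the same subspace. *)
lemma graph_change_of_basis:
  assumes a: "set [a1, a2] \<subseteq> vecs 4" "lin_indep [a1, a2]"
    and p: "set [p1, p2] \<subseteq> vecs 4" "lin_indep [p1, p2]"
    and same: "span_of [p1, p2] = span_of [a1, a2]"
  shows "\<exists>q1\<in>span_of [c1, c2]. \<exists>q2\<in>span_of [c1, c2].
           span_of [join p1 q1, join p2 q2] = span_of [join a1 c1, join a2 c2]"
proof -
  have lift: "\<exists>q\<in>span_of [c1, c2]. join x q \<in> span_of [join a1 c1, join a2 c2]"
    if "x \<in> span_of [p1, p2]" for x
    using join_lift [of "[a1, a2]" "[c1, c2]" x] that same by simp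
  have "p1 \<in> span_of [p1, p2]" "p2 \<in> span_of [p1, p2]" using set_subset_span [of "[p1, p2]"] by auto
  then obtain q1 q2 where q: "q1 \<in> span_of [c1, c2]" "q2 \<in> span_of [c1, c2]"
    and in_graph: "join p1 q1 \<in> span_of [join a1 c1, join a2 c2]"
      "join p2 q2 \<in> span_of [join a1 c1, join a2 c2]"
    using lift by meson
  have "lin_indep [join p1 q1, join p2 q2]"
    by (rule lin_indep_if_map [OF is_linear_low]) (use p in simp)
  moreover have "lin_indep [join a1 c1, join a2 c2]"
    by (rule lin_indep_if_map [OF is_linear_low]) (use a in simp)
  ultimately have "span_of [join p1 q1, join p2 q2] = span_of [join a1 c1, join a2 c2]"
    using in_graph by (intro span_eq_if_subset) simp_all
  then show ?thesis using q by blast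
qed

definition unit_vec :: "nat \<Rightarrow> vec" where
  "unit_vec k = (\<lambda>i. if i = k then 1 else 0)"

definition std_basis :: "nat \<Rightarrow> vec list" where
  "std_basis n = map unit_vec [0..<n]"

lemma lin_comb_std_basis:
  "length cs = n \<Longrightarrow> lin_comb cs (std_basis n) = (\<lambda>j. if j < n then cs ! j else 0)"
  unfolding lin_comb_def std_basis_def unit_vec_def
    by (auto simp: fun_eq_iff if_distrib cong: if_cong)

lemma length_std_basis [simp]: "length (std_basis n) = n"
  by (simp add: std_basis_def)

lemma lin_indep_std_basis: "lin_indep (std_basis n)"
  unfolding lin_indep_def
proof (intro allI impI)
  fix cs :: "bit list" assume len: "length cs = length (std_basis n)"
    and "lin_comb cs (std_basis n) = (\<lambda>_. 0)"
  then have "cs ! i = 0" if "i < n" for i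
    using that by (simp add: lin_comb_std_basis fun_eq_iff) (metis (full_types))
  then show "\<forall>c\<in>set cs. c = 0" using len by (auto simp: in_set_conv_nth)
qed

lemma std_basis_expansion: "x \<in> vecs n \<Longrightarrow> lin_comb (map x [0..<n]) (std_basis n) = x"
  by (auto simp: lin_comb_std_basis fun_eq_iff vecs_def)

lemma span_std_basis: "span_of (std_basis n) = vecs n"
proof
  show "span_of (std_basis n) \<subseteq> vecs n"
    by (rule span_subset [OF add_closed_vecs]) (auto simp: std_basis_def unit_vec_def vecs_def)
  show "vecs n \<subseteq> span_of (std_basis n)"
  proof
    fix x :: vec assume "x \<in> vecs n"
    then have "x = lin_comb (map x [0..<n]) (std_basis n)" by (simp add: std_basis_expansion)
    then show "x \<in> span_of (std_basis n)" unfolding span_of_def by force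
  qed
qed

lemma std_basis_in_vecs: "set (std_basis n) \<subseteq> vecs n"
  using set_subset_span [of "std_basis n"] span_std_basis by blast

lemma std_basis_4: "std_basis 4 = [unit_vec 0, unit_vec 1, unit_vec 2, unit_vec 3]"
  and coords_4: "map x [0..<4] = [x 0, x 1, x 2, x 3]"
  by (simp_all add: std_basis_def upt_rec numeral_3_eq_3 numeral_2_eq_2)

(* Multiplication by a root alpha of x^4 + x + 1 on F_16 = F_2^4 (coefficient vectors
   with respect to 1, alpha, alpha^2, alpha^3). *)
definition times_alpha :: "vec \<Rightarrow> vec" where
  "times_alpha x = (\<lambda>i. if i = 0 then x 3 else if i = 1 then x 0 + x 3
                        else if i = 2 then x 1 else if i = 3 then x 2 else 0)"

(* The rank-metric code: the linear map graph_map r0 r1 r2 of F_2^4 sends e0, e1, e2 to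
   r0, r1, r2 and e3 to alpha r0 + alpha^2 r1 + alpha^3 r2. *)
definition fourth_col :: "vec \<Rightarrow> vec \<Rightarrow> vec \<Rightarrow> vec" where
  "fourth_col r0 r1 r2 =
     times_alpha r0 + times_alpha (times_alpha r1) + times_alpha (times_alpha (times_alpha r2))"

definition graph_cols :: "vec \<Rightarrow> vec \<Rightarrow> vec \<Rightarrow> vec list" where
  "graph_cols r0 r1 r2 = [r0, r1, r2, fourth_col r0 r1 r2]"

definition graph_map :: "vec \<Rightarrow> vec \<Rightarrow> vec \<Rightarrow> vec \<Rightarrow> vec" where
  "graph_map r0 r1 r2 x = lin_comb (map x [0..<4]) (graph_cols r0 r1 r2)"

lemma graph_map_explicit:
  "graph_map r0 r1 r2 x = (\<lambda>j. x 0 * r0 j + x 1 * r1 j + x 2 * r2 j + x 3 * fourth_col r0 r1 r2 j)"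
  by (simp add: graph_map_def graph_cols_def coords_4 fun_eq_iff add.assoc)

lemma times_alpha_add: "times_alpha (x + y) = times_alpha x + times_alpha y"
  by (simp add: fun_eq_iff times_alpha_def add_ac)

lemma fourth_col_add:
  "fourth_col (r0 + s0) (r1 + s1) (r2 + s2) = fourth_col r0 r1 r2 + fourth_col s0 s1 s2"
  by (simp add: fourth_col_def times_alpha_add add_ac)

lemma graph_map_add_arg: "graph_map r0 r1 r2 (x + y) = graph_map r0 r1 r2 x + graph_map r0 r1 r2 y"
  by (simp add: graph_map_explicit fun_eq_iff distrib_right add_ac)

lemma graph_map_add_cols:
  "graph_map (r0 + s0) (r1 + s1) (r2 + s2) x = graph_map r0 r1 r2 x + graph_map s0 s1 s2 x"
  by (simp add: graph_map_explicit fourth_col_add fun_eq_iff distrib_left add_ac)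

lemma graph_map_zero [simp]: "graph_map r0 r1 r2 0 = 0"
  by (simp add: graph_map_explicit fun_eq_iff)

lemma graph_map_unit:
  "graph_map r0 r1 r2 (unit_vec 0) = r0" "graph_map r0 r1 r2 (unit_vec 1) = r1"
  "graph_map r0 r1 r2 (unit_vec 2) = r2" "graph_map r0 r1 r2 (unit_vec 3) = fourth_col r0 r1 r2"
  by (simp_all add: graph_map_explicit fun_eq_iff unit_vec_def)

lemma fourth_col_in_vecs [simp]: "fourth_col r0 r1 r2 \<in> vecs 4"
  by (simp add: fourth_col_def times_alpha_def vecs_def)

lemma graph_map_in_vecs:
  "r0 \<in> vecs 4 \<Longrightarrow> r1 \<in> vecs 4 \<Longrightarrow> r2 \<in> vecs 4 \<Longrightarrow> graph_map r0 r1 r2 x \<in> vecs 4"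
  using fourth_col_in_vecs [of r0 r1 r2] by (simp add: graph_map_explicit vecs_def)

lemma vecs4_eq_0:
  assumes "w \<in> vecs 4" "w 0 = 0" "w 1 = 0" "w 2 = 0" "w 3 = 0"
  shows "w = 0"
  unfolding zero_fun_def
proof (rule ext)
  fix i :: nat
  have "i < 4 \<longrightarrow> i = 0 \<or> i = 1 \<or> i = 2 \<or> i = 3" by arith
  then show "w i = 0" using assms by (cases "i < 4") (auto simp: vecs_def)
qed

(* 1, alpha, alpha^2, alpha^3 are linearly independent in F_16: for w <> 0,
   (f0 alpha + f1 alpha^2 + f2 alpha^3) w = f3 w forces all f_i = 0.  Checked by cases. *)
lemma fourth_col_scalar:
  fixes f0 f1 f2 f3 :: bit
  assumes w: "w \<in> vecs 4"
    and eq: "fourth_col (\<lambda>j. f0 * w j) (\<lambda>j. f1 * w j) (\<lambda>j. f2 * w j) = (\<lambda>j. f3 * w j)"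
  shows "(f0 = 0 \<and> f1 = 0 \<and> f2 = 0 \<and> f3 = 0) \<or> w = 0"
proof -
  have "fourth_col (\<lambda>j. f0 * w j) (\<lambda>j. f1 * w j) (\<lambda>j. f2 * w j) i = f3 * w i" for i
    using eq by simp
  from this [of 0] this [of 1] this [of 2] this [of 3]
  have "f0 * w 3 + f1 * w 2 + f2 * w 1 = f3 * w 0"
    "f0 * (w 0 + w 3) + f1 * (w 3 + w 2) + f2 * (w 2 + w 1) = f3 * w 1"
    "f0 * w 1 + f1 * (w 0 + w 3) + f2 * (w 3 + w 2) = f3 * w 2"
    "f0 * w 2 + f1 * w 1 + f2 * (w 0 + w 3) = f3 * w 3"
    by (simp_all add: fourth_col_def times_alpha_def algebra_simps)
  then have "(f0 = 0 \<and> f1 = 0 \<and> f2 = 0 \<and> f3 = 0) \<or> (w 0 = 0 \<and> w 1 = 0 \<and> w 2 = 0 \<and> w 3 = 0)"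
    by (cases f0; cases f1; cases f2; cases f3; cases "w 0"; cases "w 1"; cases "w 2"; cases "w 3")
      simp_all
  then show ?thesis using vecs4_eq_0 [OF w] by blast
qed

lemma fourth_col_rank:
  assumes w: "w \<in> vecs 4" and d: "d0 \<in> {0, w}" "d1 \<in> {0, w}" "d2 \<in> {0, w}"
    and f: "fourth_col d0 d1 d2 \<in> {0, w}"
  shows "d0 = 0 \<and> d1 = 0 \<and> d2 = 0"
proof -
  have scalar: "\<exists>c::bit. x = (\<lambda>j. c * w j)" if "x \<in> {0, w}" for x
    using that by (auto intro: exI [of _ 0] exI [of _ 1] simp: zero_fun_def)
  obtain f0 f1 f2 f3 where fs: "d0 = (\<lambda>j. f0 * w j)" "d1 = (\<lambda>j. f1 * w j)" "d2 = (\<lambda>j. f2 * w j)"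
      "fourth_col d0 d1 d2 = (\<lambda>j. f3 * w j)"
    using scalar [OF d(1)] scalar [OF d(2)] scalar [OF d(3)] scalar [OF f] by blast
  then have "(f0 = 0 \<and> f1 = 0 \<and> f2 = 0 \<and> f3 = 0) \<or> w = 0"
    using fourth_col_scalar [OF w] by simp
  then show ?thesis
  proof
    assume "f0 = 0 \<and> f1 = 0 \<and> f2 = 0 \<and> f3 = 0"
    then show ?thesis using fs by (simp add: zero_fun_def)
  qed (use d in simp)
qed

(* Every nonzero map of the code has rank >= 2: it cannot vanish on a 3-dimensional subspace,
   since then its image would be {0, w} for the image w of a complementary vector. *)
lemma graph_map_vanishing:
  assumes as: "set [a1, a2, a3] \<subseteq> vecs 4" "lin_indep [a1, a2, a3]"
    and d: "d0 \<in> vecs 4" "d1 \<in> vecs 4" "d2 \<in> vecs 4"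
    and zero: "graph_map d0 d1 d2 a1 = 0" "graph_map d0 d1 d2 a2 = 0" "graph_map d0 d1 d2 a3 = 0"
  shows "d0 = 0 \<and> d1 = 0 \<and> d2 = 0"
proof -
  let ?D = "graph_map d0 d1 d2" and ?A = "span_of [a1, a2, a3]"
  obtain e where e: "e \<in> vecs 4" "e \<notin> ?A" using exists_outside_span [OF as(2,1)] by auto
  have "lin_indep (e # [a1, a2, a3])" using e(2) as(2) lin_indep_Cons [of e] by blast
  then have "span_of (e # [a1, a2, a3]) = vecs 4"
    using e(1) as(1) by (intro span_eq_vecs) simp_all
  then have whole: "vecs 4 = ?A \<union> (+) e ` ?A" by (simp only: span_of_Cons)
  have "add_closed {x. ?D x = 0}"
    unfolding add_closed_def by (simp add: graph_map_add_arg)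
  then have kernel: "?A \<subseteq> {x. ?D x = 0}" using zero by (intro span_subset) auto
  have two_values: "?D y \<in> {0, ?D e}" if y: "y \<in> vecs 4" for y
  proof (cases "y \<in> ?A")
    case True then show ?thesis using kernel by blast
  next
    case False
    then obtain x where "x \<in> ?A" "y = e + x" using y unfolding whole by blast
    then show ?thesis using kernel by (auto simp: graph_map_add_arg)
  qed
  have units: "?D (unit_vec k) \<in> {0, ?D e}" if "k < 4" for k
    using that by (intro two_values) (simp add: unit_vec_def vecs_def)
  have "d0 \<in> {0, ?D e}" "d1 \<in> {0, ?D e}" "d2 \<in> {0, ?D e}" "fourth_col d0 d1 d2 \<in> {0, ?D e}"
    using units [of 0] units [of 1] units [of 2] units [of 3] by (simp_all only: graph_map_unit)
  then show ?thesis using fourth_col_rank [OF graph_map_in_vecs [OF d]] by blast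
qed

(* Consequently the 4096 maps of the code restrict injectively, hence bijectively, to the
   4096 linear maps on a 3-dimensional subspace: any prescribed values are attained. *)
lemma graph_interpolation:
  assumes as: "set [a1, a2, a3] \<subseteq> vecs 4" "lin_indep [a1, a2, a3]"
    and ys: "y1 \<in> vecs 4" "y2 \<in> vecs 4" "y3 \<in> vecs 4"
  shows "\<exists>r0 \<in> vecs 4. \<exists>r1 \<in> vecs 4. \<exists>r2 \<in> vecs 4.
    graph_map r0 r1 r2 a1 = y1 \<and> graph_map r0 r1 r2 a2 = y2 \<and> graph_map r0 r1 r2 a3 = y3"
proof -
  let ?V = "vecs 4 :: vec set"
  define \<Phi> where
    "\<Phi> = (\<lambda>(r0, r1, r2). (graph_map r0 r1 r2 a1, graph_map r0 r1 r2 a2, graph_map r0 r1 r2 a3))"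
  have maps_to: "\<Phi> ` (?V \<times> ?V \<times> ?V) \<subseteq> ?V \<times> ?V \<times> ?V"
    by (auto simp: \<Phi>_def graph_map_in_vecs)
  have "inj_on \<Phi> (?V \<times> ?V \<times> ?V)"
  proof (rule inj_onI)
    fix p q assume "p \<in> ?V \<times> ?V \<times> ?V" "q \<in> ?V \<times> ?V \<times> ?V" and eq: "\<Phi> p = \<Phi> q"
    then obtain r0 r1 r2 s0 s1 s2 where pq: "p = (r0, r1, r2)" "q = (s0, s1, s2)"
      and r: "r0 \<in> ?V" "r1 \<in> ?V" "r2 \<in> ?V" and s: "s0 \<in> ?V" "s1 \<in> ?V" "s2 \<in> ?V"
      by (metis mem_Sigma_iff prod_cases3)
    let ?D = "graph_map (r0 + s0) (r1 + s1) (r2 + s2)"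
    have "?D a = graph_map r0 r1 r2 a + graph_map s0 s1 s2 a" for a
      by (rule graph_map_add_cols)
    then have "?D a1 = 0" "?D a2 = 0" "?D a3 = 0"
      using eq by (simp_all add: \<Phi>_def pq)
    then have "r0 + s0 = 0 \<and> r1 + s1 = 0 \<and> r2 + s2 = 0"
      using r s add_closed_vecs [unfolded add_closed_def]
      by (intro graph_map_vanishing [OF as]) simp_all
    then show "p = q" by (simp add: vec_add_eq_0_iff pq)
  qed
  then have "\<Phi> ` (?V \<times> ?V \<times> ?V) = ?V \<times> ?V \<times> ?V"
    using maps_to by (intro endo_inj_surj) (simp_all add: finite_vecs)
  then have "(y1, y2, y3) \<in> \<Phi> ` (?V \<times> ?V \<times> ?V)" using ys by simp
  then show ?thesis by (auto simp: \<Phi>_def)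
qed

(* Vectors of F_2^4 are encoded by the numbers below 16 (binary digits as coordinates),
   with xor as addition. *)
definition code_vec :: "nat \<Rightarrow> vec" where
  "code_vec n = (\<lambda>i. if i < 4 \<and> bit n i then 1 else 0)"

definition plane_codes :: "nat \<times> nat \<Rightarrow> nat set" where
  "plane_codes ab = {0, fst ab, snd ab, xor (fst ab) (snd ab)}"

(* A packing of PG(3,2): 7 spreads, each of 5 lines partitioning the 15 points, and all 35
   lines of PG(3,2) occur.  Each entry gives two codes spanning a line and two codes
   spanning a plane complementary to it. *)
definition packing :: "((nat \<times> nat) \<times> (nat \<times> nat)) list list" where
  "packing =
    [[((4, 10), (1, 2)), ((6, 11), (1, 2)), ((5, 9), (1, 2)), ((7, 8), (1, 2)), ((1, 2), (4, 8))],
     [((7, 9), (1, 2)), ((5, 10), (1, 2)), ((2, 4), (1, 8)), ((3, 8), (1, 4)), ((1, 12), (2, 4))],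
     [((5, 11), (1, 2)), ((3, 9), (1, 4)), ((1, 6), (2, 8)), ((4, 8), (1, 2)), ((2, 13), (1, 4))],
     [((6, 8), (1, 2)), ((4, 9), (1, 2)), ((1, 10), (2, 4)), ((3, 12), (1, 4)), ((2, 5), (1, 8))],
     [((2, 8), (1, 4)), ((1, 4), (2, 8)), ((7, 11), (1, 2)), ((6, 9), (1, 2)), ((3, 13), (1, 4))],
     [((1, 8), (2, 4)), ((4, 11), (1, 2)), ((2, 12), (1, 4)), ((3, 5), (1, 8)), ((7, 10), (1, 2))],
     [((2, 9), (1, 4)), ((3, 4), (1, 8)), ((5, 8), (1, 2)), ((6, 10), (1, 2)), ((1, 14), (2, 4))]]"

lemma nonzero_codes: "{1..<16::nat} = {1, 2, 3, 4, 5, 6, 7, 8, 9, 10, 11, 12, 13, 14, 15}"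
  by (auto simp: numeral_eq_Suc) presburger

lemma packing_shape: "length packing = 7" "\<forall>sp\<in>set packing. length sp = 5"
  by (simp_all add: packing_def)

lemma packing_bases:
  "\<forall>sp\<in>set packing. \<forall>l\<in>set sp.
     fst (fst l) \<in> {1..<16} \<and> snd (fst l) \<in> {1..<16} \<and> fst (fst l) \<noteq> snd (fst l)"
  unfolding nonzero_codes by (simp add: packing_def)

lemma packing_spreads:
  "\<forall>sp\<in>set packing. \<forall>n\<in>{1..<16}. \<exists>l\<in>set sp. n \<in> plane_codes (fst l)"
  unfolding nonzero_codes by (simp add: packing_def plane_codes_def)

lemma packing_complements:
  "\<forall>sp\<in>set packing. \<forall>l\<in>set sp. \<forall>n\<in>{..<16}. \<exists>q\<in>plane_codes (snd l). xor n q \<in> plane_codes (fst l)"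
proof -
  have "{..<16::nat} = insert 0 {1..<16}" by auto
  then show ?thesis unfolding nonzero_codes by (simp add: packing_def plane_codes_def)
qed

lemma packing_pairs:
  "\<forall>m\<in>{1..<16}. \<forall>n\<in>{1..<16}. m \<noteq> n \<longrightarrow>
    (\<exists>sp\<in>set packing. \<exists>l\<in>set sp. m \<in> plane_codes (fst l) \<and> n \<in> plane_codes (fst l))"
  unfolding nonzero_codes by (simp add: packing_def plane_codes_def)

lemma code_vec_xor: "code_vec m + code_vec n = code_vec (xor m n)"
  by (rule ext) (auto simp: code_vec_def bit_xor_iff)

lemma code_vec_0 [simp]: "code_vec 0 = 0"
  by (simp add: code_vec_def fun_eq_iff)

lemma code_vec_in_vecs [simp]: "code_vec n \<in> vecs 4"
  by (simp add: code_vec_def vecs_def)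

lemma code_vec_inj: "inj_on code_vec {..<16}"
proof (rule inj_onI)
  fix m n :: nat assume "m \<in> {..<16}" "n \<in> {..<16}" and eq: "code_vec m = code_vec n"
  have high_bits: "\<not> bit k i" if "k < 16" "4 \<le> i" for k i :: nat
  proof -
    have "(16::nat) \<le> 2 ^ i" using power_increasing [OF that(2), of "2::nat"] by simp
    then show ?thesis using that(1) by (simp add: bit_iff_odd)
  qed
  show "m = n"
  proof (rule bit_eqI)
    fix i show "bit m i = bit n i"
    proof (cases "i < 4")
      case True then show ?thesis using fun_cong [OF eq, of i]
        by (simp add: code_vec_def split: if_splits)
    next
      case False then show ?thesis using high_bits \<open>m \<in> {..<16}\<close> \<open>n \<in> {..<16}\<close> by simp
    qed
  qed
qed

lemma code_vec_onto: "code_vec ` {..<16} = vecs 4"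
proof (rule card_subset_eq [OF finite_vecs])
  show "code_vec ` {..<16} \<subseteq> vecs 4" by auto
  show "card (code_vec ` {..<16}) = card (vecs 4 :: vec set)"
    using card_image [OF code_vec_inj] by (simp add: card_vecs)
qed

lemma code_of_nonzero:
  assumes "a \<in> vecs 4" "a \<noteq> 0"
  obtains n where "n \<in> {1..<16}" "a = code_vec n"
proof -
  obtain n where n: "n < 16" "a = code_vec n" using assms(1) code_vec_onto by force
  then have "n \<in> {1..<16}" using assms(2) by (cases "n = 0") auto
  then show ?thesis using that n(2) by blast
qed

definition plane :: "nat \<times> nat \<Rightarrow> vec set" where
  "plane ab = span_of [code_vec (fst ab), code_vec (snd ab)]"

lemma code_vec_plane: "n \<in> plane_codes ab \<Longrightarrow> code_vec n \<in> plane ab"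
  by (auto simp: plane_codes_def plane_def span_of_pair code_vec_xor)

type_synonym entry = "(nat \<times> nat) \<times> (nat \<times> nat)"

definition line_basis :: "entry \<Rightarrow> vec list" where
  "line_basis l = [code_vec (fst (fst l)), code_vec (snd (fst l))]"

lemma line_eq_span: "plane (fst l) = span_of (line_basis l)"
  by (simp add: plane_def line_basis_def)

lemma plane_in_vecs: "plane ab \<subseteq> vecs 4"
  unfolding plane_def by (rule span_subset [OF add_closed_vecs]) simp

lemma line_basis_indep:
  assumes "sp \<in> set packing" "l \<in> set sp"
  shows "lin_indep (line_basis l)"
proof -
  have codes: "fst (fst l) \<in> {1..<16}" "snd (fst l) \<in> {1..<16}" "fst (fst l) \<noteq> snd (fst l)"
    using packing_bases assms by blast+
  have "code_vec (fst (fst l)) \<noteq> code_vec (snd (fst l))"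
    using inj_onD [OF code_vec_inj] codes by fastforce
  moreover have "code_vec n \<noteq> 0" if "n \<in> {1..<16}" for n
    using inj_onD [OF code_vec_inj, of n 0] that by fastforce
  ultimately show ?thesis using codes by (simp add: line_basis_def lin_indep_pair)
qed

lemma spread_covers:
  assumes "sp \<in> set packing" "a \<in> vecs 4" "a \<noteq> 0"
  shows "\<exists>l\<in>set sp. a \<in> plane (fst l)"
proof -
  obtain n where "n \<in> {1..<16}" "a = code_vec n" using code_of_nonzero [OF assms(2,3)] .
  then show ?thesis using packing_spreads assms(1) code_vec_plane by blast
qed

lemma packing_covers_pairs:
  assumes "set [a, b] \<subseteq> vecs 4" "lin_indep [a, b]"
  shows "\<exists>sp\<in>set packing. \<exists>l\<in>set sp. a \<in> plane (fst l) \<and> b \<in> plane (fst l)"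
proof -
  have nz: "a \<noteq> 0" "b \<noteq> 0" "a \<noteq> b" using assms(2) by (simp_all add: lin_indep_pair)
  obtain m where m: "m \<in> {1..<16}" "a = code_vec m" using code_of_nonzero nz(1) assms(1) by auto
  obtain n where n: "n \<in> {1..<16}" "b = code_vec n" using code_of_nonzero nz(2) assms(1) by auto
  have "m \<noteq> n" using m n nz(3) by blast
  then show ?thesis using packing_pairs m n code_vec_plane by blast
qed

lemma complement_decomposition:
  assumes "sp \<in> set packing" "l \<in> set sp" "y \<in> vecs 4"
  shows "\<exists>q\<in>plane (snd l). \<exists>t\<in>plane (fst l). y = q + t"
proof -
  obtain n where n: "n < 16" "y = code_vec n" using assms(3) code_vec_onto by force
  then obtain q where q: "q \<in> plane_codes (snd l)" "xor n q \<in> plane_codes (fst l)"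
    using packing_complements assms(1,2) by blast
  have "y = code_vec q + code_vec (xor n q)"
    using n(2) by (simp add: code_vec_xor [symmetric] add.left_commute)
  then show ?thesis using q code_vec_plane by blast
qed

definition kernel_block :: "vec set" where
  "kernel_block = span_of (map (join 0) (std_basis 4))"

definition graph_block :: "vec \<Rightarrow> vec \<Rightarrow> vec \<Rightarrow> vec set" where
  "graph_block r0 r1 r2 = span_of (map2 join (std_basis 4) (graph_cols r0 r1 r2))"

definition mixed_block :: "entry \<Rightarrow> entry \<Rightarrow> vec \<Rightarrow> vec \<Rightarrow> vec set" where
  "mixed_block l' l q1 q2 =
     span_of (map2 join (line_basis l') [q1, q2] @ map (join 0) (line_basis l))"

lemma kernel_block_contains: "y \<in> vecs 4 \<Longrightarrow> join 0 y \<in> kernel_block"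
  unfolding kernel_block_def
    by (rule is_linear_span [OF is_linear_join_zero]) (simp add: span_std_basis)

lemma graph_block_contains: "x \<in> vecs 4 \<Longrightarrow> join x (graph_map r0 r1 r2 x) \<in> graph_block r0 r1 r2"
proof -
  assume x: "x \<in> vecs 4"
  have "join x (graph_map r0 r1 r2 x) =
      join (lin_comb (map x [0..<4]) (std_basis 4)) (graph_map r0 r1 r2 x)"
    using std_basis_expansion [OF x] by simp
  also have "\<dots> = lin_comb (map x [0..<4]) (map2 join (std_basis 4) (graph_cols r0 r1 r2))"
    unfolding graph_map_def by (rule join_lin_comb) (simp_all add: graph_cols_def)
  finally show ?thesis unfolding graph_block_def span_of_def by (auto simp: graph_cols_def)
qed

lemma mixed_block_graph_part:
  "line_basis l' = [p1, p2] \<Longrightarrow> span_of [join p1 q1, join p2 q2] \<subseteq> mixed_block l' l q1 q2"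
  unfolding mixed_block_def by (rule span_subset_span) (auto intro: set_subset_span [THEN subsetD])

lemma mixed_block_line_part: "t \<in> plane (fst l) \<Longrightarrow> join 0 t \<in> mixed_block l' l q1 q2"
proof -
  assume "t \<in> plane (fst l)"
  then have "join 0 t \<in> span_of (map (join 0) (line_basis l))"
    using line_eq_span by (auto intro: is_linear_span [OF is_linear_join_zero])
  also have "\<dots> \<subseteq> mixed_block l' l q1 q2"
    unfolding mixed_block_def
      by (rule span_subset_span) (auto intro: set_subset_span [THEN subsetD])
  finally show ?thesis .
qed

(* Write y_i = c_i + t_i with c_i in the complement of L
   and t_i in L, and describe the map a_i -> c_i by its values on the basis of L'. *)
lemma mixed_block_contains:
  assumes sp: "sp \<in> set packing" "l' \<in> set sp" "l \<in> set sp"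
    and a: "lin_indep [a1, a2]" "a1 \<in> plane (fst l')" "a2 \<in> plane (fst l')"
    and y: "y1 \<in> vecs 4" "y2 \<in> vecs 4"
  shows "\<exists>q1\<in>plane (snd l). \<exists>q2\<in>plane (snd l).
           {join a1 y1, join a2 y2} \<union> join 0 ` plane (fst l) \<subseteq> mixed_block l' l q1 q2"
proof -
  obtain c1 t1 where c1: "c1 \<in> plane (snd l)" "t1 \<in> plane (fst l)" "y1 = c1 + t1"
    using complement_decomposition [OF sp(1,3) y(1)] by blast
  obtain c2 t2 where c2: "c2 \<in> plane (snd l)" "t2 \<in> plane (fst l)" "y2 = c2 + t2"
    using complement_decomposition [OF sp(1,3) y(2)] by blast
  obtain p1 p2 where p: "line_basis l' = [p1, p2]" by (simp add: line_basis_def)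
  have p_basis: "set [p1, p2] \<subseteq> vecs 4" "lin_indep [p1, p2]"
    using p line_basis_indep [OF sp(1,2)] by (auto simp: line_basis_def)
  have a_vecs: "set [a1, a2] \<subseteq> vecs 4" using a(2,3) plane_in_vecs [of "fst l'"] by auto
  have "span_of [a1, a2] = span_of [p1, p2]"
    using a p p_basis line_eq_span [of l'] by (intro span_eq_if_subset) simp_all
  then obtain q1 q2 where q: "q1 \<in> span_of [c1, c2]" "q2 \<in> span_of [c1, c2]"
      and graph: "span_of [join p1 q1, join p2 q2] = span_of [join a1 c1, join a2 c2]"
    using graph_change_of_basis [OF a_vecs a(1) p_basis] by metis
  have q_compl: "q1 \<in> plane (snd l)" "q2 \<in> plane (snd l)"
    using q c1(1) c2(1) span_subset_span [of "[c1, c2]"] unfolding plane_def by auto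
  let ?K = "mixed_block l' l q1 q2"
  have "join a y \<in> ?K"
    if "join a c \<in> span_of [join a1 c1, join a2 c2]" "y = c + t" "t \<in> plane (fst l)" for a c t y
  proof -
    have "join a y = join a c + join 0 t" by (simp add: join_add that(2))
    moreover have "join a c \<in> ?K" using that(1) mixed_block_graph_part [OF p] graph by blast
    moreover have "join 0 t \<in> ?K" using mixed_block_line_part [OF that(3)] .
    ultimately show ?thesis using add_closed_span unfolding mixed_block_def add_closed_def by metis
  qed
  then have "join a1 y1 \<in> ?K" "join a2 y2 \<in> ?K"
    using c1 c2 set_subset_span [of "[join a1 c1, join a2 c2]"] by auto
  then show ?thesis using q_compl mixed_block_line_part by blast
qed

definition graph_blocks :: "vec set set" where
  "graph_blocks = (\<lambda>(r0, r1, r2). graph_block r0 r1 r2) ` (vecs 4 \<times> vecs 4 \<times> vecs 4)"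

definition mixed_blocks :: "vec set set" where
  "mixed_blocks = {mixed_block l' l q1 q2 | sp l' l q1 q2.
     sp \<in> set packing \<and> l' \<in> set sp \<and> l \<in> set sp \<and> q1 \<in> plane (snd l) \<and> q2 \<in> plane (snd l)}"

definition blocks :: "vec set set" where
  "blocks = insert kernel_block (graph_blocks \<union> mixed_blocks)"

definition covered :: "vec set \<Rightarrow> bool" where
  "covered R \<longleftrightarrow> (\<exists>K\<in>blocks. R \<subseteq> K)"

lemma covered_by_span:
  "K = span_of bs \<Longrightarrow> K \<in> blocks \<Longrightarrow> set vs \<subseteq> K \<Longrightarrow> covered (span_of vs)"
  unfolding covered_def using span_subset_span by blast

lemma mixed_block_in_blocks:
  "sp \<in> set packing \<Longrightarrow> l' \<in> set sp \<Longrightarrow> l \<in> set sp \<Longrightarrow> q1 \<in> plane (snd l) \<Longrightarrow> q2 \<in> plane (snd l) \<Longrightarrow>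
    mixed_block l' l q1 q2 \<in> blocks"
  unfolding blocks_def mixed_blocks_def by blast

lemma covered_kernel:
  assumes "set vs \<subseteq> vecs 8" "\<forall>v\<in>set vs. low v = 0"
  shows "covered (span_of vs)"
proof (rule covered_by_span [OF kernel_block_def])
  show "kernel_block \<in> blocks" by (simp add: blocks_def)
  show "set vs \<subseteq> kernel_block"
  proof
    fix v assume "v \<in> set vs"
    then have "v = join 0 (high v)" using assms join_low_high [of v] by auto
    then show "v \<in> kernel_block" using kernel_block_contains [OF high_in_vecs, of v] by metis
  qed
qed

lemma covered_graph:
  assumes "set [v1, v2, v3] \<subseteq> vecs 8" "lin_indep (map low [v1, v2, v3])"
  shows "covered (span_of [v1, v2, v3])"
proof -
  obtain r0 r1 r2 where r: "r0 \<in> vecs 4" "r1 \<in> vecs 4" "r2 \<in> vecs 4"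
    and vals: "graph_map r0 r1 r2 (low v1) = high v1" "graph_map r0 r1 r2 (low v2) = high v2"
      "graph_map r0 r1 r2 (low v3) = high v3"
    using graph_interpolation [of "low v1" "low v2" "low v3" "high v1" "high v2" "high v3"] assms(2)
    by auto
  have "v = join (low v) (graph_map r0 r1 r2 (low v))" if "v \<in> set [v1, v2, v3]" for v
    using that assms(1) vals join_low_high by auto
  then have "set [v1, v2, v3] \<subseteq> graph_block r0 r1 r2"
    using graph_block_contains [OF low_in_vecs] by (metis subsetI)
  moreover have "graph_block r0 r1 r2 \<in> blocks"
    using r unfolding blocks_def graph_blocks_def by auto
  ultimately show ?thesis using covered_by_span [OF graph_block_def] by blast
qed

lemma covered_mixed:
  assumes sp: "sp \<in> set packing" "l' \<in> set sp" "l \<in> set sp"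
    and a: "lin_indep [a1, a2]" "a1 \<in> plane (fst l')" "a2 \<in> plane (fst l')"
    and y: "y1 \<in> vecs 4" "y2 \<in> vecs 4"
    and vs: "set vs \<subseteq> {join a1 y1, join a2 y2} \<union> join 0 ` plane (fst l)"
  shows "covered (span_of vs)"
proof -
  obtain q1 q2 where q: "q1 \<in> plane (snd l)" "q2 \<in> plane (snd l)"
    and K: "{join a1 y1, join a2 y2} \<union> join 0 ` plane (fst l) \<subseteq> mixed_block l' l q1 q2"
    using mixed_block_contains [OF sp a y] by blast
  show ?thesis
    using covered_by_span [OF mixed_block_def mixed_block_in_blocks [OF sp q]] vs K by blast
qed

(* The upper
   halves of z1, z2 span a line L of some spread, low u lies on a line L' of the same
   spread, and low u extends to a basis [low u, b] of L'. *)
lemma covered_rank1: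
  assumes vs: "set [z1, z2, u] \<subseteq> vecs 8" "lin_indep [z1, z2, u]" and low: "low z1 = 0" "low z2 = 0"
  shows "covered (span_of [z1, z2, u])"
proof (cases "low u = 0")
  case True then show ?thesis using covered_kernel vs(1) low by auto
next
  case False
  have z: "z1 = join 0 (high z1)" "z2 = join 0 (high z2)" using vs(1) low low_zero_join by auto
  have "lin_indep [z1, z2]" using lin_indep_prefix [of "[z1, z2]" "[u]"] vs(2) by simp
  then have "lin_indep (map (join 0) [high z1, high z2])" by (simp flip: z)
  then have "lin_indep [high z1, high z2]" by (rule lin_indep_if_map [OF is_linear_join_zero])
  then obtain sp l where sp: "sp \<in> set packing" "l \<in> set sp"
      and d: "high z1 \<in> plane (fst l)" "high z2 \<in> plane (fst l)"
    using packing_covers_pairs [of "high z1" "high z2"] by auto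
  obtain l' where l': "l' \<in> set sp" "low u \<in> plane (fst l')"
    using spread_covers [OF sp(1) low_in_vecs False] by blast
  obtain us where us: "length us + 1 = 2" "lin_indep (low u # us)"
      "span_of (low u # us) = plane (fst l')"
    using exchange [OF line_basis_indep [OF sp(1) l'(1)], of "low u"] l'(2) False
    by (auto simp: line_eq_span line_basis_def)
  then obtain b where b: "us = [b]" by (auto simp: length_Suc_conv)
  have "b \<in> plane (fst l')" using us(3) set_subset_span [of "low u # us"] b by auto
  moreover have "(0::vec) \<in> vecs 4" by (simp add: vecs_def)
  moreover have "set [z1, z2, u] \<subseteq> {join (low u) (high u), join b 0} \<union> join 0 ` plane (fst l)"
    using d z join_low_high [of u] vs(1) by auto
  ultimately show ?thesis
    using covered_mixed [OF sp(1) l'(1) sp(2) _ l'(2) _ high_in_vecs] us(2) b by blast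
qed

(* If low u1, low u2
   are independent they lie on a common line L' of some spread, and high z on a line L of
   the same spread; otherwise the exchange lemma reduces to the previous case. *)
lemma covered_rank2:
  assumes vs: "set [z, u1, u2] \<subseteq> vecs 8" "lin_indep [z, u1, u2]" and low: "low z = 0"
  shows "covered (span_of [z, u1, u2])"
proof -
  have z: "z = join 0 (high z)" using vs(1) low low_zero_join by auto
  have ind: "lin_indep [u1, u2]" "z \<notin> span_of [u1, u2]"
    using vs(2) by (simp_all add: lin_indep_Cons [of z])
  show ?thesis
  proof (cases "lin_indep [low u1, low u2]")
    case True
    then obtain sp l' where sp: "sp \<in> set packing" "l' \<in> set sp"
        and a: "low u1 \<in> plane (fst l')" "low u2 \<in> plane (fst l')"
      using packing_covers_pairs [of "low u1" "low u2"] by auto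
    have "high z \<noteq> 0" using z ind(2) by (metis join_zero zero_in_span)
    then obtain l where l: "l \<in> set sp" "high z \<in> plane (fst l)"
      using spread_covers [OF sp(1) high_in_vecs] by blast
    have "set [z, u1, u2] \<subseteq>
        {join (low u1) (high u1), join (low u2) (high u2)} \<union> join 0 ` plane (fst l)"
      using l(2) z join_low_high [of u1] join_low_high [of u2] vs(1) by auto
    then show ?thesis using covered_mixed [OF sp l(1) True a high_in_vecs high_in_vecs] by blast
  next
    case False
    then obtain z' where z': "z' \<in> span_of [u1, u2]" "z' \<noteq> 0" "low z' = 0"
      using kernel_vector [OF is_linear_low ind(1)] by auto
    then obtain us where us: "length us + 1 = length [u1, u2]" "lin_indep (z' # us)"
        "span_of (z' # us) = span_of [u1, u2]"
      using exchange [OF ind(1)] by blast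
    then obtain u where u: "us = [u]" by (auto simp: length_Suc_conv)
    have same: "span_of [z, z', u] = span_of [z, u1, u2]"
      using span_Cons_cong [OF us(3), of z] u by simp
    have "set [z', u] \<subseteq> vecs 8"
      using span_in_vecs [of "[u1, u2]"] set_subset_span [of "z' # us"] us(3) u vs(1) by auto
    moreover have "lin_indep [z, z', u]" using ind(2) us u by (simp add: lin_indep_Cons [of z])
    ultimately have "covered (span_of [z, z', u])"
      using covered_rank1 [of z z' u] vs(1) low z'(3) by simp
    then show ?thesis using same by simp
  qed
qed

(* Every 3-dimensional subspace R is covered: if low is injective on R, R is a graph;
   otherwise some nonzero z in R has low z = 0, and a basis [z, u1, u2] of R adapted to z
   brings us to the previous cases. *)
lemma covered_all:
  assumes vs: "set [v1, v2, v3] \<subseteq> vecs 8" "lin_indep [v1, v2, v3]"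
  shows "covered (span_of [v1, v2, v3])"
proof (cases "lin_indep (map low [v1, v2, v3])")
  case True then show ?thesis using covered_graph vs(1) by blast
next
  case False
  then obtain z where z: "z \<in> span_of [v1, v2, v3]" "z \<noteq> 0" "low z = 0"
    using kernel_vector [OF is_linear_low vs(2)] by blast
  then obtain us where us: "length us + 1 = length [v1, v2, v3]" "lin_indep (z # us)"
      "span_of (z # us) = span_of [v1, v2, v3]"
    using exchange [OF vs(2)] by blast
  then obtain u1 u2 where u: "us = [u1, u2]" by (auto simp: length_Suc_conv numeral_eq_Suc)
  have "set (z # us) \<subseteq> vecs 8"
    using span_in_vecs [OF vs(1)] set_subset_span [of "z # us"] us(3) by auto
  then have "covered (span_of [z, u1, u2])" using covered_rank2 us(2) u z(3) by simp
  then show ?thesis using us(3) u by simp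
qed

lemma span_is_subspace:
  "length bs = 4 \<Longrightarrow> set bs \<subseteq> vecs 8 \<Longrightarrow> lin_indep bs \<Longrightarrow> span_of bs \<in> subspaces_dim TYPE(bit) 8 4"
  unfolding subspaces_dim_def by blast

lemma kernel_block_subspace: "kernel_block \<in> subspaces_dim TYPE(bit) 8 4"
proof -
  have "map high (map (join 0) (std_basis 4)) = std_basis 4"
    using std_basis_in_vecs [of 4] by (simp add: std_basis_4)
  then have "lin_indep (map (join 0) (std_basis 4))"
    using lin_indep_if_map [OF is_linear_high] lin_indep_std_basis by metis
  then show ?thesis unfolding kernel_block_def by (intro span_is_subspace) auto
qed

lemma graph_block_subspace: "graph_block r0 r1 r2 \<in> subspaces_dim TYPE(bit) 8 4"
proof -
  have "map low (map2 join (std_basis 4) (graph_cols r0 r1 r2)) = std_basis 4"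
    using std_basis_in_vecs [of 4] by (simp add: std_basis_4 graph_cols_def)
  then have "lin_indep (map2 join (std_basis 4) (graph_cols r0 r1 r2))"
    using lin_indep_if_map [OF is_linear_low] lin_indep_std_basis by metis
  then show ?thesis unfolding graph_block_def
    by (intro span_is_subspace) (auto simp: graph_cols_def std_basis_4)
qed

lemma mixed_block_subspace:
  assumes "sp \<in> set packing" "l' \<in> set sp" "l \<in> set sp"
  shows "mixed_block l' l q1 q2 \<in> subspaces_dim TYPE(bit) 8 4"
proof -
  have l': "map low (map2 join (line_basis l') [q1, q2]) = line_basis l'"
    by (simp add: line_basis_def)
  have "map high (map (join 0) (line_basis l)) = line_basis l"
    by (simp add: line_basis_def)
  then have "lin_indep (map (join 0) (line_basis l))"
    using lin_indep_if_map [OF is_linear_high] line_basis_indep [OF assms(1,3)] by metis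
  then have "lin_indep (map2 join (line_basis l') [q1, q2] @ map (join 0) (line_basis l))"
    using line_basis_indep [OF assms(1,2)]
    by (intro lin_indep_append [OF is_linear_low]) (simp_all add: l' line_basis_def)
  then show ?thesis unfolding mixed_block_def
    by (intro span_is_subspace) (simp_all add: line_basis_def)
qed

lemma blocks_are_subspaces: "blocks \<subseteq> subspaces_dim TYPE(bit) 8 4"
  using kernel_block_subspace graph_block_subspace mixed_block_subspace
  unfolding blocks_def graph_blocks_def mixed_blocks_def by auto

(* Counting: 1 + 4096 + 7 * 5 * 5 * 4 * 4 = 6897 blocks. *)
lemma card_UN_le_mult:
  assumes "finite I" "card I \<le> m" "\<And>i. i \<in> I \<Longrightarrow> card (A i) \<le> k"
  shows "card (\<Union>i\<in>I. A i) \<le> m * k"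
proof -
  have "card (\<Union>i\<in>I. A i) \<le> (\<Sum>i\<in>I. card (A i))" by (rule card_UN_le [OF assms(1)])
  also have "\<dots> \<le> card I * k" using sum_bounded_above [of I "\<lambda>i. card (A i)" k] assms(3) by simp
  also have "\<dots> \<le> m * k" using assms(2) by simp
  finally show ?thesis .
qed

lemma card_graph_blocks: "finite graph_blocks" "card graph_blocks \<le> 4096"
proof -
  have "finite (vecs 4 \<times> vecs 4 \<times> vecs 4 :: (vec \<times> vec \<times> vec) set)" by (simp add: finite_vecs)
  moreover have "card (vecs 4 \<times> vecs 4 \<times> vecs 4 :: (vec \<times> vec \<times> vec) set) = 4096"
    by (simp add: card_cartesian_product card_vecs)
  ultimately show "finite graph_blocks" "card graph_blocks \<le> 4096"
    unfolding graph_blocks_def using card_image_le by (simp, metis)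
qed

lemma card_mixed_blocks: "finite mixed_blocks" "card mixed_blocks \<le> 2800"
proof -
  let ?T = "\<Union>sp\<in>set packing. \<Union>l'\<in>set sp. \<Union>l\<in>set sp. {l'} \<times> {l} \<times> plane (snd l) \<times> plane (snd l)"
  have eq: "mixed_blocks = (\<lambda>(l', l, q1, q2). mixed_block l' l q1 q2) ` ?T"
    unfolding mixed_blocks_def by fastforce
  have plane_card: "finite (plane ab)" "card (plane ab) \<le> 4" for ab
    using finite_span card_span_le [of "[code_vec (fst ab), code_vec (snd ab)]"] unfolding plane_def
      by simp_all
  have fin: "finite ?T" using plane_card(1) by auto
  have "card ?T \<le> 7 * (5 * (5 * 16))"
  proof (rule card_UN_le_mult)
    fix sp assume sp: "sp \<in> set packing"
    show "card (\<Union>l'\<in>set sp. \<Union>l\<in>set sp. {l'} \<times> {l} \<times> plane (snd l) \<times> plane (snd l)) \<le> 5 * (5 * 16)"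
    proof (rule card_UN_le_mult)
      fix l' assume "l' \<in> set sp"
      show "card (\<Union>l\<in>set sp. {l'} \<times> {l} \<times> plane (snd l) \<times> plane (snd l)) \<le> 5 * 16"
      proof (rule card_UN_le_mult)
        fix l :: entry
        show "card ({l'} \<times> {l} \<times> plane (snd l) \<times> plane (snd l)) \<le> 16"
          using plane_card [of "snd l"]
            mult_le_mono [of "card (plane (snd l))" 4 "card (plane (snd l))" 4]
          by (simp add: card_cartesian_product)
      qed (use sp packing_shape(2) card_length [of sp] in auto)
    qed (use sp packing_shape(2) card_length [of sp] in auto)
  qed (use packing_shape(1) card_length [of packing] in auto)
  then show "card mixed_blocks \<le> 2800"
    unfolding eq using card_image_le [OF fin] le_trans by fastforce
  show "finite mixed_blocks" unfolding eq using fin by simp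
qed

lemma card_blocks: "finite blocks" "card blocks \<le> 6897"
proof -
  have "card blocks \<le> Suc (card (graph_blocks \<union> mixed_blocks))"
    unfolding blocks_def
      by (rule card_insert_le_m1) (simp_all add: card_graph_blocks card_mixed_blocks)
  then show "card blocks \<le> 6897"
    using card_Un_le [of graph_blocks mixed_blocks] card_graph_blocks card_mixed_blocks by simp
  show "finite blocks" by (simp add: blocks_def card_graph_blocks card_mixed_blocks)
qed

theorem mainTheorem13:
  shows "covering_number TYPE(bit) 8 4 3 \<le> 6897"
proof -
  have "\<forall>R\<in>subspaces_dim TYPE(bit) 8 3. \<exists>K\<in>blocks. R \<subseteq> K"
  proof
    fix R assume "R \<in> subspaces_dim TYPE(bit) 8 3"
    then obtain v1 v2 v3
      where "set [v1, v2, v3] \<subseteq> vecs 8" "lin_indep [v1, v2, v3]" "R = span_of [v1, v2, v3]"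
      unfolding subspaces_dim_def by (auto simp: length_Suc_conv numeral_eq_Suc)
    then show "\<exists>K\<in>blocks. R \<subseteq> K" using covered_all unfolding covered_def by blast
  qed
  then have "covering_number TYPE(bit) 8 4 3 \<le> card blocks"
    unfolding covering_number_def using blocks_are_subspaces card_blocks(1)
    by (intro Least_le) blast
  then show ?thesis using card_blocks(2) by simp
qed

end
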